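(* Let $\Delta>0$, $\sigma_m>0$ and $\rho_m\in(-1,1)$. Let $(x_m,w_m)$ be a pair of real random variables with joint probability density $$f(x_m,w_m)=\frac{1}{2\pi\sigma_m^2\sqrt{1-\rho_m^2}}\exp\!\left(-\frac{x_m^2+w_m^2-2\rho_m x_m w_m}{2\sigma_m^2(1-\rho_m^2)}\right),$$ and define $$k_m=\frac{|x_m-w_m|}{\Delta^2\left(1+\frac{(x_m+w_m)^2}{4\Delta^2}\right)^{3/2}}.$$ Then $$E\{k_m\}=\int_{-\infty}^{\infty}\int_{-\infty}^{\infty} k_m\, f(x_m,w_m)\,\mathrm{d}x_m\,\mathrm{d}w_m=\frac{4}{\pi\Delta}\sqrt{\frac{1-\rho_m}{1+\rho_m}}\int_0^{\infty}\frac{1}{(1+\eta^2)^{3/2}}\exp\!\left(-\frac{\Delta^2}{\sigma_m^2(1+\rho_m)}\eta^2\right)\mathrm{d}\eta .$$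
   Context: Setting: a signal $(y_1,\dots,y_N)$ sampled at equally spaced points with spacing $\Delta$; for $m=2,\dots,N-1$, $x_m=y_{m+1}-y_m$ and $w_m=y_m-y_{m-1}$ are modeled as jointly Gaussian, zero mean, each with variance $\sigma_m^2$ and correlation coefficient $\rho_m=\mathrm{Cov}\{x_m,w_m\}/\sigma_m^2$. The quantity $k_m$ is the finite-difference approximation at the $m$-th sample of the curvature $|y''|/(1+y'^2)^{3/2}$ of the signal. *)

theory Defs
  imports "HOL-Probability.Probability"
begin

definition biv_normal_density :: "real \<Rightarrow> real \<Rightarrow> real \<times> real \<Rightarrow> real" where
  "biv_normal_density \<sigma> \<rho> = (\<lambda>(x, w).
     1 / (2 * pi * \<sigma>\<^sup>2 * sqrt (1 - \<rho>\<^sup>2)) *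
     exp (- (x\<^sup>2 + w\<^sup>2 - 2 * \<rho> * x * w) / (2 * \<sigma>\<^sup>2 * (1 - \<rho>\<^sup>2))))"

definition curvature_fd :: "real \<Rightarrow> real \<times> real \<Rightarrow> real" where
  "curvature_fd \<Delta> = (\<lambda>(x, w).
     \<bar>x - w\<bar> / (\<Delta>\<^sup>2 * (1 + (x + w)\<^sup>2 / (4 * \<Delta>\<^sup>2)) powr (3/2)))"

end

theory Submission
  imports Defs "HOL-Real_Asymp.Real_Asymp"
begin

text \<open>In the rotated coordinates \<open>u = x - w\<close>, \<open>v = x + w\<close> (Jacobian \<open>1/2\<close>) the two variables
  are independent centred Gaussians with variances \<open>2\<sigma>\<^sup>2(1 - \<rho>)\<close> and \<open>2\<sigma>\<^sup>2(1 + \<rho>)\<close>, and the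
  curvature is \<open>|u|\<close> times a function of \<open>v\<close> alone. The expectation therefore splits into a
  product: the first absolute moment \<open>\<integral>|u| exp(-u\<^sup>2/a) du = a\<close> of a Gaussian, and a one-dimensional
  integral in \<open>v\<close> which becomes the stated one after substituting \<open>v = 2\<Delta>\<eta>\<close> and using evenness.\<close>

lemma nn_integral_lborel_pair_rotate:
  fixes F :: "real \<times> real \<Rightarrow> ennreal"
  assumes [measurable]: "F \<in> borel_measurable borel"
  shows "(\<integral>\<^sup>+p. F p \<partial>lborel) =
    ennreal (1/2) * (\<integral>\<^sup>+u. \<integral>\<^sup>+v. F ((v + u) / 2, (v - u) / 2) \<partial>lborel \<partial>lborel)"
proof -
  have P: "pair_sigma_finite lborel lborel" by unfold_locales
  have "(\<integral>\<^sup>+p. F p \<partial>lborel) = (\<integral>\<^sup>+w. \<integral>\<^sup>+x. F (x, w) \<partial>lborel \<partial>lborel)"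
    using pair_sigma_finite.nn_integral_snd[OF P, of F] by (simp add: lborel_prod)
  also have "\<dots> = (\<integral>\<^sup>+w. \<integral>\<^sup>+u. F (w + u, w) \<partial>lborel \<partial>lborel)"
    using nn_integral_real_affine[where c=1 and f="\<lambda>x. F (x, _)"] by simp
  also have "\<dots> = (\<integral>\<^sup>+u. \<integral>\<^sup>+w. F (w + u, w) \<partial>lborel \<partial>lborel)"
    using pair_sigma_finite.Fubini[OF P, of "\<lambda>(u, w). F (w + u, w)"] by simp
  also have "\<dots> = (\<integral>\<^sup>+u. ennreal (1/2) * \<integral>\<^sup>+v. F ((v + u) / 2, (v - u) / 2) \<partial>lborel \<partial>lborel)"
  proof (rule nn_integral_cong)
    fix u :: real
    show "(\<integral>\<^sup>+w. F (w + u, w) \<partial>lborel) = ennreal (1/2) * \<integral>\<^sup>+v. F ((v + u) / 2, (v - u) / 2) \<partial>lborel"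
      using nn_integral_real_affine[where c="1/2" and t="- u / 2" and f="\<lambda>w. F (w + u, w)"]
      by (simp add: field_simps)
  qed
  also have "\<dots> = ennreal (1/2) * (\<integral>\<^sup>+u. \<integral>\<^sup>+v. F ((v + u) / 2, (v - u) / 2) \<partial>lborel \<partial>lborel)"
    by (rule nn_integral_cmult) simp
  finally show ?thesis .
qed

lemma nn_integral_lborel_even:
  fixes g :: "real \<Rightarrow> real"
  assumes [measurable]: "g \<in> borel_measurable borel" and even: "\<And>x. g (- x) = g x"
  shows "(\<integral>\<^sup>+x. ennreal (g x) \<partial>lborel) = 2 * (\<integral>\<^sup>+x\<in>{0..}. ennreal (g x) \<partial>lborel)"
proof -
  have "(\<integral>\<^sup>+x. ennreal (g x) \<partial>lborel) =
      (\<integral>\<^sup>+x. ennreal (g x) * indicator {0..} x + ennreal (g x) * indicator {..0} x \<partial>lborel)"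
    by (intro nn_integral_cong_AE, use AE_lborel_singleton[of 0] in eventually_elim)
      (auto simp: indicator_def)
  also have "\<dots> = (\<integral>\<^sup>+x\<in>{0..}. ennreal (g x) \<partial>lborel) + (\<integral>\<^sup>+x\<in>{..0}. ennreal (g x) \<partial>lborel)"
    by (rule nn_integral_add) auto
  also have "(\<integral>\<^sup>+x\<in>{..0}. ennreal (g x) \<partial>lborel) = (\<integral>\<^sup>+x\<in>{0..}. ennreal (g x) \<partial>lborel)"
    by (subst nn_integral_real_affine[where c="-1" and t=0])
      (auto simp: even indicator_def intro!: nn_integral_cong)
  finally show ?thesis by (simp add: mult_2)
qed

lemma nn_integral_separable:
  fixes f :: "'a \<Rightarrow> ennreal" and g :: "'b \<Rightarrow> ennreal"
  assumes "f \<in> borel_measurable M" and "g \<in> borel_measurable N"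
  shows "(\<integral>\<^sup>+u. \<integral>\<^sup>+v. f u * g v \<partial>N \<partial>M) = integral\<^sup>N M f * integral\<^sup>N N g"
  using assms by (simp add: nn_integral_cmult nn_integral_multc)

lemma nn_integral_abs_times_gaussian:
  fixes a :: real
  assumes "a > 0"
  shows "(\<integral>\<^sup>+u. ennreal (\<bar>u\<bar> * exp (- u\<^sup>2 / a)) \<partial>lborel) = ennreal a"
proof -
  have "(\<integral>\<^sup>+u\<in>{0..}. ennreal (\<bar>u\<bar> * exp (- u\<^sup>2 / a)) \<partial>lborel) =
      (\<integral>\<^sup>+u\<in>{0..}. ennreal (u * exp (- u\<^sup>2 / a)) \<partial>lborel)"
    by (intro nn_integral_cong) (auto simp: indicator_def)
  also have "\<dots> = ennreal (0 - (- (a/2) * exp (- 0\<^sup>2 / a)))"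
  proof (rule nn_integral_FTC_atLeast)
    show "DERIV (\<lambda>u. - (a/2) * exp (- u\<^sup>2 / a)) x :> x * exp (- x\<^sup>2 / a)" for x
      using assms by (auto intro!: derivative_eq_intros simp: field_simps power2_eq_square)
    show "((\<lambda>u. - (a/2) * exp (- u\<^sup>2 / a)) \<longlongrightarrow> 0) at_top"
      using assms by real_asymp
  qed auto
  finally have "(\<integral>\<^sup>+u\<in>{0..}. ennreal (\<bar>u\<bar> * exp (- u\<^sup>2 / a)) \<partial>lborel) = ennreal (a/2)"
    by simp
  moreover have "2 * ennreal (a/2) = ennreal a"
    using assms by (simp add: ennreal_numeral[symmetric] ennreal_mult[symmetric] del: ennreal_numeral)
  ultimately show ?thesis
    by (subst nn_integral_lborel_even) auto
qed

lemma nn_integral_inverse_one_plus_square_atLeast: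
  "(\<integral>\<^sup>+u\<in>{0..}. ennreal (1 / (1 + u\<^sup>2)) \<partial>lborel) = ennreal (pi / 2)"
proof -
  have "(\<integral>\<^sup>+u\<in>{0..}. ennreal (1 / (1 + u\<^sup>2)) \<partial>lborel) = ennreal (pi / 2 - arctan 0)"
  proof (rule nn_integral_FTC_atLeast)
    show "DERIV arctan x :> 1 / (1 + x\<^sup>2)" for x
      using DERIV_arctan[of x] by (simp add: divide_inverse)
  qed (auto intro: tendsto_arctan_at_top add_pos_nonneg)
  then show ?thesis by simp
qed

definition curvature_weight :: "real \<Rightarrow> real \<Rightarrow> real" where
  "curvature_weight \<mu> \<eta> = 1 / (1 + \<eta>\<^sup>2) powr (3/2) * exp (- \<mu> * \<eta>\<^sup>2)"

lemma curvature_weight_nonneg: "0 \<le> curvature_weight \<mu> \<eta>"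
  by (simp add: curvature_weight_def)

lemma curvature_weight_even: "curvature_weight \<mu> (- \<eta>) = curvature_weight \<mu> \<eta>"
  by (simp add: curvature_weight_def)

lemma borel_measurable_curvature_weight [measurable]:
  "curvature_weight \<mu> \<in> borel_measurable borel"
  unfolding curvature_weight_def by measurable

lemma curvature_weight_le:
  assumes "0 \<le> \<mu>"
  shows "curvature_weight \<mu> \<eta> \<le> 1 / (1 + \<eta>\<^sup>2)"
proof -
  have pos: "0 < 1 + \<eta>\<^sup>2" by (simp add: add_pos_nonneg)
  have "1 + \<eta>\<^sup>2 \<le> (1 + \<eta>\<^sup>2) powr (3/2)"
    using powr_mono[of 1 "3/2" "1 + \<eta>\<^sup>2"] by simp
  then have "1 / (1 + \<eta>\<^sup>2) powr (3/2) \<le> 1 / (1 + \<eta>\<^sup>2)"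
    using pos by (intro divide_left_mono) auto
  moreover have "exp (- \<mu> * \<eta>\<^sup>2) \<le> 1"
    using assms by simp
  ultimately show ?thesis
    unfolding curvature_weight_def
    by (meson dual_order.trans exp_ge_zero mult_left_le zero_le_divide_1_iff powr_ge_zero)
qed

lemma nn_integral_curvature_weight_finite:
  assumes "0 \<le> \<mu>"
  shows "(\<integral>\<^sup>+\<eta>\<in>{0..}. ennreal (curvature_weight \<mu> \<eta>) \<partial>lborel) < \<infinity>"
proof -
  have "(\<integral>\<^sup>+\<eta>\<in>{0..}. ennreal (curvature_weight \<mu> \<eta>) \<partial>lborel) \<le>
      (\<integral>\<^sup>+\<eta>\<in>{0..}. ennreal (1 / (1 + \<eta>\<^sup>2)) \<partial>lborel)"
    using assms by (intro nn_integral_mono mult_right_mono ennreal_leI curvature_weight_le) auto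
  then show ?thesis
    by (simp add: nn_integral_inverse_one_plus_square_atLeast order_le_less_trans)
qed

lemma nn_integral_curvature_weight_rescaled:
  assumes "\<Delta> > 0"
  shows "(\<integral>\<^sup>+v. ennreal (curvature_weight \<mu> (v / (2 * \<Delta>)) / \<Delta>\<^sup>2) \<partial>lborel) =
    ennreal (4 / \<Delta>) * (\<integral>\<^sup>+\<eta>\<in>{0..}. ennreal (curvature_weight \<mu> \<eta>) \<partial>lborel)"
proof -
  have "(\<integral>\<^sup>+v. ennreal (curvature_weight \<mu> (v / (2 * \<Delta>)) / \<Delta>\<^sup>2) \<partial>lborel) =
      ennreal (2 * \<Delta>) * (\<integral>\<^sup>+\<eta>. ennreal (1 / \<Delta>\<^sup>2) * ennreal (curvature_weight \<mu> \<eta>) \<partial>lborel)"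
    using assms nn_integral_real_affine[where c="2 * \<Delta>" and t=0
        and f="\<lambda>v. ennreal (curvature_weight \<mu> (v / (2 * \<Delta>)) / \<Delta>\<^sup>2)"]
    by (simp add: ennreal_mult'[symmetric] curvature_weight_nonneg)
  also have "\<dots> = ennreal (2 * \<Delta>) * ennreal (1 / \<Delta>\<^sup>2) * (2 * (\<integral>\<^sup>+\<eta>\<in>{0..}. ennreal (curvature_weight \<mu> \<eta>) \<partial>lborel))"
    by (simp add: nn_integral_cmult nn_integral_lborel_even curvature_weight_even mult.assoc)
  also have "\<dots> = ennreal (4 / \<Delta>) * (\<integral>\<^sup>+\<eta>\<in>{0..}. ennreal (curvature_weight \<mu> \<eta>) \<partial>lborel)"
    using assms by (simp add: ennreal_mult'[symmetric] ennreal_numeral[symmetric] power2_eq_square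
        mult.assoc[symmetric] del: ennreal_numeral)
  finally show ?thesis .
qed

lemma curvature_fd_rotate:
  "curvature_fd \<Delta> ((v + u) / 2, (v - u) / 2) = \<bar>u\<bar> / (\<Delta>\<^sup>2 * (1 + (v / (2 * \<Delta>))\<^sup>2) powr (3/2))"
proof -
  have "(v + u) / 2 - (v - u) / 2 = u" and "(v + u) / 2 + (v - u) / 2 = v"
    by (simp_all add: field_simps)
  moreover have "v\<^sup>2 / (4 * \<Delta>\<^sup>2) = (v / (2 * \<Delta>))\<^sup>2"
    by (simp add: power_divide power_mult_distrib)
  ultimately show ?thesis
    by (simp add: curvature_fd_def)
qed

lemma biv_normal_density_rotate:
  assumes "\<sigma> > 0" and "-1 < \<rho>" and "\<rho> < 1"
  shows "biv_normal_density \<sigma> \<rho> ((v + u) / 2, (v - u) / 2) =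
    1 / (2 * pi * \<sigma>\<^sup>2 * sqrt (1 - \<rho>\<^sup>2)) *
    exp (- u\<^sup>2 / (4 * \<sigma>\<^sup>2 * (1 - \<rho>))) * exp (- v\<^sup>2 / (4 * \<sigma>\<^sup>2 * (1 + \<rho>)))"
proof -
  have quadratic_form: "((v + u) / 2)\<^sup>2 + ((v - u) / 2)\<^sup>2 - 2 * \<rho> * ((v + u) / 2) * ((v - u) / 2) =
      (u\<^sup>2 * (1 + \<rho>) + v\<^sup>2 * (1 - \<rho>)) / 2"
    by (simp add: power2_eq_square field_simps)
  \<comment> \<open>stated for abstract \<open>p = 1 - \<rho>\<close>, \<open>q = 1 + \<rho>\<close> so that \<open>field_simps\<close> only needs \<open>p, q \<noteq> 0\<close>\<close>
  have "- ((u\<^sup>2 * q + v\<^sup>2 * p) / 2) / (2 * \<sigma>\<^sup>2 * (p * q)) =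
      - u\<^sup>2 / (4 * \<sigma>\<^sup>2 * p) + - v\<^sup>2 / (4 * \<sigma>\<^sup>2 * q)" if "p \<noteq> 0" "q \<noteq> 0" for p q
    using that assms(1) by (simp add: field_simps)
  moreover have "1 - \<rho>\<^sup>2 = (1 - \<rho>) * (1 + \<rho>)"
    by (simp add: power2_eq_square algebra_simps)
  ultimately have exponent: "- (((v + u) / 2)\<^sup>2 + ((v - u) / 2)\<^sup>2 - 2 * \<rho> * ((v + u) / 2) * ((v - u) / 2)) /
      (2 * \<sigma>\<^sup>2 * (1 - \<rho>\<^sup>2)) = - u\<^sup>2 / (4 * \<sigma>\<^sup>2 * (1 - \<rho>)) + - v\<^sup>2 / (4 * \<sigma>\<^sup>2 * (1 + \<rho>))"
    using assms(2,3) unfolding quadratic_form by (simp only: minus_divide_left)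
  show ?thesis
    unfolding biv_normal_density_def split_beta fst_conv snd_conv exponent exp_add by simp
qed

lemma borel_measurable_curvature_fd_times_biv_normal_density [measurable]:
  "(\<lambda>p. curvature_fd \<Delta> p * biv_normal_density \<sigma> \<rho> p) \<in> borel_measurable borel"
  unfolding curvature_fd_def biv_normal_density_def split_beta borel_prod[symmetric] by measurable

lemma nn_integral_curvature_fd_biv_normal_density:
  assumes "\<Delta> > 0" and "\<sigma> > 0" and "-1 < \<rho>" and "\<rho> < 1"
  shows "(\<integral>\<^sup>+p. ennreal (curvature_fd \<Delta> p * biv_normal_density \<sigma> \<rho> p) \<partial>lborel) =
    ennreal (4 / (pi * \<Delta>) * sqrt ((1 - \<rho>) / (1 + \<rho>))) *
    (\<integral>\<^sup>+\<eta>\<in>{0..}. ennreal (curvature_weight (\<Delta>\<^sup>2 / (\<sigma>\<^sup>2 * (1 + \<rho>))) \<eta>) \<partial>lborel)"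
    (is "_ = ennreal ?K * ?J")
proof -
  define C where "C = 1 / (2 * pi * \<sigma>\<^sup>2 * sqrt (1 - \<rho>\<^sup>2))"
  define a where "a = 4 * \<sigma>\<^sup>2 * (1 - \<rho>)"
  define W where "W = (\<lambda>v. curvature_weight (\<Delta>\<^sup>2 / (\<sigma>\<^sup>2 * (1 + \<rho>))) (v / (2 * \<Delta>)) / \<Delta>\<^sup>2)"
  have "1 - \<rho>\<^sup>2 > 0"
    using assms(3,4) by (simp add: abs_square_less_1)
  then have C_pos: "C > 0" and a_pos: "a > 0"
    using assms by (simp_all add: C_def a_def)
  have W_nonneg: "W v \<ge> 0" for v
    by (simp add: W_def curvature_weight_nonneg)
  have factorization: "curvature_fd \<Delta> ((v + u) / 2, (v - u) / 2) * biv_normal_density \<sigma> \<rho> ((v + u) / 2, (v - u) / 2) =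
      C * (\<bar>u\<bar> * exp (- u\<^sup>2 / a)) * W v" for u v
  proof -
    have "v\<^sup>2 / (4 * \<sigma>\<^sup>2 * (1 + \<rho>)) = \<Delta>\<^sup>2 / (\<sigma>\<^sup>2 * (1 + \<rho>)) * (v / (2 * \<Delta>))\<^sup>2"
      using assms by (simp add: power_divide power_mult_distrib)
    then show ?thesis
      using assms
      by (simp add: curvature_fd_rotate biv_normal_density_rotate C_def a_def W_def curvature_weight_def
          powr_divide mult_ac)
  qed
  have gaussian_factor: "(\<integral>\<^sup>+u. ennreal (C * (\<bar>u\<bar> * exp (- u\<^sup>2 / a))) \<partial>lborel) = ennreal C * ennreal a"
    using C_pos by (simp add: ennreal_mult nn_integral_cmult nn_integral_abs_times_gaussian[OF a_pos, symmetric])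
  have curvature_factor: "(\<integral>\<^sup>+v. ennreal (W v) \<partial>lborel) = ennreal (4 / \<Delta>) * ?J"
    unfolding W_def using assms(1) by (rule nn_integral_curvature_weight_rescaled)
  have "(\<integral>\<^sup>+p. ennreal (curvature_fd \<Delta> p * biv_normal_density \<sigma> \<rho> p) \<partial>lborel) =
      ennreal (1/2) * (\<integral>\<^sup>+u. \<integral>\<^sup>+v. ennreal (C * (\<bar>u\<bar> * exp (- u\<^sup>2 / a))) * ennreal (W v) \<partial>lborel \<partial>lborel)"
    using C_pos W_nonneg
    by (simp add: nn_integral_lborel_pair_rotate factorization ennreal_mult)
  also have "\<dots> = ennreal (1/2) *
      ((\<integral>\<^sup>+u. ennreal (C * (\<bar>u\<bar> * exp (- u\<^sup>2 / a))) \<partial>lborel) * (\<integral>\<^sup>+v. ennreal (W v) \<partial>lborel))"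
    by (subst nn_integral_separable) (auto simp: W_def)
  also have "\<dots> = ennreal (1/2) * (ennreal C * ennreal a * (ennreal (4 / \<Delta>) * ?J))"
    by (simp only: gaussian_factor curvature_factor)
  also have "\<dots> = ennreal (1/2 * C * a * (4 / \<Delta>)) * ?J"
    using C_pos a_pos assms(1) by (simp add: ennreal_mult[symmetric] mult.assoc[symmetric] del: ennreal_half)
  also have "1/2 * C * a * (4 / \<Delta>) = ?K"
  proof -
    have "1 - \<rho>\<^sup>2 = (1 - \<rho>) * (1 + \<rho>)"
      by (simp add: power2_eq_square algebra_simps)
    then have "(1 - \<rho>)\<^sup>2 / (1 - \<rho>\<^sup>2) = (1 - \<rho>) / (1 + \<rho>)"
      using assms(4) by (simp add: power2_eq_square)
    then have "sqrt ((1 - \<rho>) / (1 + \<rho>)) = sqrt ((1 - \<rho>)\<^sup>2 / (1 - \<rho>\<^sup>2))"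
      by simp
    then have sqrt_eq: "sqrt ((1 - \<rho>) / (1 + \<rho>)) = (1 - \<rho>) / sqrt (1 - \<rho>\<^sup>2)"
      using assms(4) by (simp add: real_sqrt_divide)
    show ?thesis
      unfolding C_def a_def sqrt_eq using assms \<open>1 - \<rho>\<^sup>2 > 0\<close> by (simp add: field_simps)
  qed
  finally show ?thesis .
qed

theorem proposition1:
  fixes \<Delta> \<sigma> \<rho> :: real
  assumes "\<Delta> > 0" and "\<sigma> > 0" and "-1 < \<rho>" and "\<rho> < 1"
  shows "integrable lborel (\<lambda>p. curvature_fd \<Delta> p * biv_normal_density \<sigma> \<rho> p)
    \<and> (\<integral>p. curvature_fd \<Delta> p * biv_normal_density \<sigma> \<rho> p \<partial>lborel)
      = 4 / (pi * \<Delta>) * sqrt ((1 - \<rho>) / (1 + \<rho>)) *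
        (\<integral>\<eta>\<in>{0..}. 1 / (1 + \<eta>\<^sup>2) powr (3/2) *
            exp (- (\<Delta>\<^sup>2 / (\<sigma>\<^sup>2 * (1 + \<rho>))) * \<eta>\<^sup>2) \<partial>lborel)"
proof -
  define \<mu> where "\<mu> = \<Delta>\<^sup>2 / (\<sigma>\<^sup>2 * (1 + \<rho>))"
  define K where "K = 4 / (pi * \<Delta>) * sqrt ((1 - \<rho>) / (1 + \<rho>))"
  have "0 \<le> \<mu>" and "0 \<le> K"
    using assms by (simp_all add: \<mu>_def K_def)
  then obtain j where J: "(\<integral>\<^sup>+\<eta>\<in>{0..}. ennreal (curvature_weight \<mu> \<eta>) \<partial>lborel) = ennreal j" and "0 \<le> j"
    using nn_integral_curvature_weight_finite[OF \<open>0 \<le> \<mu>\<close>] by (auto simp: less_top_ennreal)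
  have "(\<integral>\<^sup>+\<eta>. ennreal (indicator {0..} \<eta> *\<^sub>R curvature_weight \<mu> \<eta>) \<partial>lborel) = ennreal j"
    unfolding J[symmetric] by (intro nn_integral_cong) (simp add: indicator_def)
  then have weight_integral: "(\<integral>\<eta>\<in>{0..}. curvature_weight \<mu> \<eta> \<partial>lborel) = j"
    using \<open>0 \<le> j\<close> unfolding set_lebesgue_integral_def
    by (subst (asm) nn_integral_eq_integrable) (auto simp: curvature_weight_nonneg)
  have "1 - \<rho>\<^sup>2 > 0"
    using assms(3,4) by (simp add: abs_square_less_1)
  then have "0 \<le> curvature_fd \<Delta> p * biv_normal_density \<sigma> \<rho> p" for p
    by (simp add: curvature_fd_def biv_normal_density_def split_beta)
  moreover have "(\<integral>\<^sup>+p. ennreal (curvature_fd \<Delta> p * biv_normal_density \<sigma> \<rho> p) \<partial>lborel) = ennreal (K * j)"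
    using nn_integral_curvature_fd_biv_normal_density[OF assms, folded \<mu>_def K_def] \<open>0 \<le> K\<close> \<open>0 \<le> j\<close>
    by (simp add: J ennreal_mult)
  ultimately have "integrable lborel (\<lambda>p. curvature_fd \<Delta> p * biv_normal_density \<sigma> \<rho> p)
      \<and> (\<integral>p. curvature_fd \<Delta> p * biv_normal_density \<sigma> \<rho> p \<partial>lborel) = K * j"
    using \<open>0 \<le> K\<close> \<open>0 \<le> j\<close> by (subst nn_integral_eq_integrable[symmetric]) auto
  then show ?thesis
    using weight_integral by (simp add: K_def \<mu>_def curvature_weight_def)
qed

end
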